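(* Let $A$ be a nonempty finite set of $n$ alternatives. If a choice rule $C$ on $A$ satisfies capacity-filling, monotonicity, and the capacity-wise weak axiom of revealed preference (CWARP), then it also satisfies the irrelevance of accepted alternatives.
   Context: Let $\mathcal{A}$ be the set of all nonempty subsets of $A$. A choice rule is a map $C$ assigning to each $(S,q)\in\mathcal{A}\times\{1,\dots,n\}$ a nonempty set $C(S,q)\subseteq S$ with $|C(S,q)|\le q$; write $R(S,q)=S\setminus C(S,q)$. Capacity-filling: for each $(S,q)$, $|C(S,q)|=\min\{|S|,q\}$. Monotonicity: for each $S\in\mathcal{A}$ and $q\in\{1,\dots,n-1\}$, $C(S,q)\subseteq C(S,q+1)$. For $q\in\{2,\dots,n\}$ and $a,b\in A$, $a$ is revealed to be preferred to $b$ at $q$ if there exists $S\in\mathcal{A}$ with $a,b\notin C(S,q-1)$, $a\in C(S,q)$ and $b\in R(S,q)$. CWARP: for each $q\in\{2,\dots,n\}$ and each $a,b\in A$, if $a$ is revealed to be preferred to $b$ at $q$, then $b$ is not revealed to be preferred to $a$ at $q$. Irrelevance of accepted alternatives: for each $S,S'\in\mathcal{A}$ and $q\in\{1,\dots,n-1\}$, if $R(S,q)=R(S',q)$ then $C(S,q+1)\cap R(S,q)=C(S',q+1)\cap R(S',q)$. *)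

theory Defs
  imports Main
begin

definition choice_rule :: "'a set \<Rightarrow> ('a set \<Rightarrow> nat \<Rightarrow> 'a set) \<Rightarrow> bool" where
  "choice_rule A C \<longleftrightarrow>
     (\<forall>S q. S \<subseteq> A \<and> S \<noteq> {} \<and> 1 \<le> q \<and> q \<le> card A \<longrightarrow>
        C S q \<noteq> {} \<and> C S q \<subseteq> S \<and> card (C S q) \<le> q)"

definition rej :: "('a set \<Rightarrow> nat \<Rightarrow> 'a set) \<Rightarrow> 'a set \<Rightarrow> nat \<Rightarrow> 'a set" where
  "rej C S q = S - C S q"

definition capacity_filling :: "'a set \<Rightarrow> ('a set \<Rightarrow> nat \<Rightarrow> 'a set) \<Rightarrow> bool" where
  "capacity_filling A C \<longleftrightarrow>
     (\<forall>S q. S \<subseteq> A \<and> S \<noteq> {} \<and> 1 \<le> q \<and> q \<le> card A \<longrightarrow>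
        card (C S q) = min (card S) q)"

definition monotonicity :: "'a set \<Rightarrow> ('a set \<Rightarrow> nat \<Rightarrow> 'a set) \<Rightarrow> bool" where
  "monotonicity A C \<longleftrightarrow>
     (\<forall>S q. S \<subseteq> A \<and> S \<noteq> {} \<and> 1 \<le> q \<and> q \<le> card A - 1 \<longrightarrow>
        C S q \<subseteq> C S (q + 1))"

definition revealed_pref ::
  "'a set \<Rightarrow> ('a set \<Rightarrow> nat \<Rightarrow> 'a set) \<Rightarrow> nat \<Rightarrow> 'a \<Rightarrow> 'a \<Rightarrow> bool" where
  "revealed_pref A C q a b \<longleftrightarrow>
     (\<exists>S. S \<subseteq> A \<and> S \<noteq> {} \<and> a \<notin> C S (q - 1) \<and> b \<notin> C S (q - 1)
          \<and> a \<in> C S q \<and> b \<in> rej C S q)"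

definition CWARP :: "'a set \<Rightarrow> ('a set \<Rightarrow> nat \<Rightarrow> 'a set) \<Rightarrow> bool" where
  "CWARP A C \<longleftrightarrow>
     (\<forall>q a b. 2 \<le> q \<and> q \<le> card A \<and> revealed_pref A C q a b
        \<longrightarrow> \<not> revealed_pref A C q b a)"

definition irrelevance_accepted :: "'a set \<Rightarrow> ('a set \<Rightarrow> nat \<Rightarrow> 'a set) \<Rightarrow> bool" where
  "irrelevance_accepted A C \<longleftrightarrow>
     (\<forall>S S' q. S \<subseteq> A \<and> S \<noteq> {} \<and> S' \<subseteq> A \<and> S' \<noteq> {} \<and> 1 \<le> q \<and> q \<le> card A - 1
        \<and> rej C S q = rej C S' q \<longrightarrow>
        C S (q + 1) \<inter> rej C S q = C S' (q + 1) \<inter> rej C S' q)"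

end

theory Submission
  imports Defs
begin

text \<open>Under capacity-filling and monotonicity, raising the capacity from q to q + 1 admits
  exactly one previously rejected alternative whenever something was rejected. If two menus
  with the same rejected set admitted different alternatives x and y, then x would be revealed
  preferred to y at q + 1 on the first menu and y to x on the second, contradicting CWARP.\<close>

lemma subset_card_step_singleton:
  assumes "finite S" "X \<subseteq> Y" "Y \<subseteq> S" "X \<noteq> S"
    and "card X = min (card S) q" "card Y = min (card S) (Suc q)"
  shows "\<exists>x. Y \<inter> (S - X) = {x}"
proof -
  have "finite X" using finite_subset[OF assms(2) finite_subset[OF assms(3,1)]] .
  have "X \<subset> S" using assms(2-4) by blast
  then have "card X < card S" using psubset_card_mono[OF assms(1)] by blast
  then have "card X = q" "card Y = Suc q" using assms(5,6) by auto
  then have "card (Y - X) = 1" using card_Diff_subset[OF \<open>finite X\<close> assms(2)] by simp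
  moreover have "Y \<inter> (S - X) = Y - X" using assms(2,3) by blast
  ultimately show ?thesis by (metis card_1_singletonE)
qed

lemma chosen_inter_rej_singleton:
  assumes "finite A" "choice_rule A C" "capacity_filling A C" "monotonicity A C"
    and "S \<subseteq> A" "S \<noteq> {}" "1 \<le> q" "q \<le> card A - 1" "rej C S q \<noteq> {}"
  shows "\<exists>x. C S (q + 1) \<inter> rej C S q = {x}"
proof -
  have "card A > 0" using assms(1,5,6) by (auto simp: card_gt_0_iff)
  then have "q < card A" using assms(8) by linarith
  then have "C S (q + 1) \<subseteq> S" "C S q \<noteq> S"
    using assms(2,5-7,9) unfolding choice_rule_def rej_def by auto
  moreover have "C S q \<subseteq> C S (q + 1)"
    using assms(4-8) unfolding monotonicity_def by blast
  moreover have "card (C S q) = min (card S) q" "card (C S (q + 1)) = min (card S) (Suc q)"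
    using assms(3,5-7) \<open>q < card A\<close> unfolding capacity_filling_def by auto
  ultimately show ?thesis
    using subset_card_step_singleton[of S "C S q" "C S (q + 1)" q] finite_subset[OF assms(5,1)]
    unfolding rej_def by auto
qed

lemma revealed_pref_of_chosen_inter_rej:
  assumes "S \<subseteq> A" "S \<noteq> {}" "C S (q + 1) \<inter> rej C S q = {x}"
    and "y \<in> rej C S q" "y \<noteq> x"
  shows "revealed_pref A C (q + 1) x y"
  unfolding revealed_pref_def
  using assms unfolding rej_def by (intro exI[of _ S]) auto

theorem lemma1:
  fixes A :: "'a set" and C :: "'a set \<Rightarrow> nat \<Rightarrow> 'a set"
  assumes "finite A" and "A \<noteq> {}"
    and "choice_rule A C"
    and "capacity_filling A C"
    and "monotonicity A C"
    and "CWARP A C"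
  shows "irrelevance_accepted A C"
  unfolding irrelevance_accepted_def
proof (intro allI impI, elim conjE)
  fix S S' q
  assume S: "S \<subseteq> A" "S \<noteq> {}" and S': "S' \<subseteq> A" "S' \<noteq> {}"
    and q: "1 \<le> q" "q \<le> card A - 1" and R: "rej C S q = rej C S' q"
  show "C S (q + 1) \<inter> rej C S q = C S' (q + 1) \<inter> rej C S' q"
  proof (cases "rej C S q = {}")
    case False
    obtain x where x: "C S (q + 1) \<inter> rej C S q = {x}"
      using chosen_inter_rej_singleton[OF assms(1,3-5) S q False] by blast
    obtain y where y: "C S' (q + 1) \<inter> rej C S' q = {y}"
      using chosen_inter_rej_singleton[OF assms(1,3-5) S' q] False R by auto
    have "x = y"
    proof (rule ccontr)
      assume "x \<noteq> y"
      then have "revealed_pref A C (q + 1) x y" "revealed_pref A C (q + 1) y x"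
        using revealed_pref_of_chosen_inter_rej[OF S x, of y]
          revealed_pref_of_chosen_inter_rej[OF S' y, of x] x y R by auto
      moreover have "q + 1 \<le> card A" using q \<open>A \<noteq> {}\<close> \<open>finite A\<close> by (simp add: card_gt_0_iff)
      ultimately show False using assms(6) q unfolding CWARP_def by auto
    qed
    then show ?thesis using x y by simp
  qed (use R in simp)
qed

end
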